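(* Consider the discrete-time, time-varying affine system $$x(t+1)=A(t)x(t)+B(t)u(t)+s+w(t),\qquad t=0,\dots,T-1,$$ with $x(t)\in\mathbb{R}^n$, $u(t)\in\mathbb{R}^m$, $s\in\mathbb{R}^n$, under an affine (causal, time-varying) state-feedback policy $\mathbf{u}=\mathbf{K}\mathbf{x}+\mathbf{u_s}$, where $\mathbf{K}\in\mathbb{R}^{m(T+1)\times n(T+1)}$ is block lower triangular (blocks of size $m\times n$) and $\mathbf{u_s}\in\mathbb{R}^{m(T+1)}$. Define $$\boldsymbol{\Phi_x}=(I-\mathcal{Z}\mathcal{A}-\mathcal{Z}\mathcal{B}\mathbf{K})^{-1},\quad \boldsymbol{\phi_x}=\boldsymbol{\Phi_x}\mathcal{Z}(\mathcal{B}\mathbf{u_s}+\mathbf{s}),$$ $$\boldsymbol{\Phi_u}=\mathbf{K}(I-\mathcal{Z}\mathcal{A}-\mathcal{Z}\mathcal{B}\mathbf{K})^{-1},\quad \boldsymbol{\phi_u}=\boldsymbol{\Phi_u}\mathcal{Z}(\mathcal{B}\mathbf{u_s}+\mathbf{s})+\mathbf{u_s},$$ where $I=I_{n(T+1)}$ (the inverse exists since $I-\mathcal{Z}\mathcal{A}-\mathcal{Z}\mathcal{B}\mathbf{K}$ is block lower triangular with identity diagonal blocks). Then the closed-loop trajectories satisfy $\mathbf{x}=\boldsymbol{\Phi_x}\mathbf{w}+\boldsymbol{\phi_x}$, $\mathbf{u}=\boldsymbol{\Phi_u}\mathbf{w}+\boldsymbol{\phi_u}$, and: 1. The quadruple $\{\boldsymbol{\Phi_x},\boldsymbol{\phi_x},\boldsymbol{\Phi_u},\boldsymbol{\phi_u}\}$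 satisfies the affine constraint $$\begin{bmatrix} I-\mathcal{Z}\mathcal{A} & -\mathcal{Z}\mathcal{B}\end{bmatrix}\begin{bmatrix}\boldsymbol{\Phi_x} & \boldsymbol{\phi_x}\\ \boldsymbol{\Phi_u} & \boldsymbol{\phi_u}\end{bmatrix}=\begin{bmatrix} I & \mathcal{Z}\mathbf{s}\end{bmatrix}.\qquad (\star)$$ 2. Conversely, for any $\boldsymbol{\Phi_x}\in\mathbb{R}^{n(T+1)\times n(T+1)}$, $\boldsymbol{\Phi_u}\in\mathbb{R}^{m(T+1)\times n(T+1)}$ block lower triangular, and any $\boldsymbol{\phi_x}\in\mathbb{R}^{n(T+1)}$, $\boldsymbol{\phi_u}\in\mathbb{R}^{m(T+1)}$ satisfying $(\star)$, the matrix $\boldsymbol{\Phi_x}$ is invertible, and the affine policy $\mathbf{u}=\mathbf{K}\mathbf{x}+\mathbf{u_s}$ with $\mathbf{K}=\boldsymbol{\Phi_u}\boldsymbol{\Phi_x}^{-1}$ and $\mathbf{u_s}=\boldsymbol{\phi_u}-\boldsymbol{\Phi_u}\boldsymbol{\Phi_x}^{-1}\boldsymbol{\phi_x}$ achieves exactly these maps, i.e. $(I-\mathcal{Z}\mathcal{A}-\mathcal{Z}\mathcal{B}\mathbf{K})^{-1}=\boldsymbol{\Phi_x}$, $\mathbf{K}(I-\mathcal{Z}\mathcal{A}-\mathcal{Z}\mathcal{B}\mathbf{K})^{-1}=\boldsymbol{\Phi_u}$, $\boldsymbol{\Phi_x}\mathcal{Z}(\mathcal{B}\mathbf{u_s}+\mathbf{s})=\boldsymbol{\phi_x}$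 and $\boldsymbol{\Phi_u}\mathcal{Z}(\mathcal{B}\mathbf{u_s}+\mathbf{s})+\mathbf{u_s}=\boldsymbol{\phi_u}$.
   Context: Signals over the horizon are stacked: $\mathbf{x}=[x_0^\top,\dots,x_T^\top]^\top\in\mathbb{R}^{n(T+1)}$, $\mathbf{u}=[u_0^\top,\dots,u_T^\top]^\top\in\mathbb{R}^{m(T+1)}$, $\mathbf{w}=[x(0)^\top,w(0)^\top,\dots,w(T-1)^\top]^\top\in\mathbb{R}^{n(T+1)}$ (initial state followed by disturbances), and $\mathbf{s}=[s^\top,\dots,s^\top,\mathbf{0}_n^\top]^\top\in\mathbb{R}^{n(T+1)}$ ($T$ copies of $s$ followed by a zero block). $\mathcal{A}=\mathrm{diag}(A(0),\dots,A(T-1),\mathbf{0}_{n\times n})$ and $\mathcal{B}=\mathrm{diag}(B(0),\dots,B(T-1),\mathbf{0}_{n\times m})$ are block-diagonal. $\mathcal{Z}\in\mathbb{R}^{n(T+1)\times n(T+1)}$ is the block-downshift operator: identity blocks $I_n$ on the first block subdiagonal and zeros elsewhere. With this notation the dynamics over the horizon read $\mathbf{x}=\mathcal{Z}\mathcal{A}\mathbf{x}+\mathcal{Z}\mathcal{B}\mathbf{u}+\mathcal{Z}\mathbf{s}+\mathbf{w}$. *)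

theory Defs
  imports "Jordan_Normal_Form.Matrix"
begin

text \<open>Stacked horizon objects. Indices range over 0..n(T+1)-1; entry i lies in block i div n
  at position i mod n.\<close>

definition Zop :: "nat \<Rightarrow> nat \<Rightarrow> real mat" where
  "Zop n T = mat (n*(T+1)) (n*(T+1))
     (\<lambda>(i,j). if i div n = j div n + 1 \<and> i mod n = j mod n then 1 else 0)"

definition calA :: "nat \<Rightarrow> nat \<Rightarrow> (nat \<Rightarrow> real mat) \<Rightarrow> real mat" where
  "calA n T A = mat (n*(T+1)) (n*(T+1))
     (\<lambda>(i,j). if i div n = j div n \<and> i div n < T then A (i div n) $$ (i mod n, j mod n) else 0)"

definition calB :: "nat \<Rightarrow> nat \<Rightarrow> nat \<Rightarrow> (nat \<Rightarrow> real mat) \<Rightarrow> real mat" where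
  "calB n m T B = mat (n*(T+1)) (m*(T+1))
     (\<lambda>(i,j). if i div n = j div m \<and> i div n < T then B (i div n) $$ (i mod n, j mod m) else 0)"

definition sbold :: "nat \<Rightarrow> nat \<Rightarrow> real vec \<Rightarrow> real vec" where
  "sbold n T s = vec (n*(T+1)) (\<lambda>i. if i div n < T then s $ (i mod n) else 0)"

definition block_lower_tri :: "nat \<Rightarrow> nat \<Rightarrow> nat \<Rightarrow> real mat \<Rightarrow> bool" where
  "block_lower_tri p q T M \<longleftrightarrow> M \<in> carrier_mat (p*(T+1)) (q*(T+1)) \<and>
     (\<forall>i j. i < p*(T+1) \<longrightarrow> j < q*(T+1) \<longrightarrow> i div p < j div q \<longrightarrow> M $$ (i,j) = 0)"

text \<open>The (two-sided) inverse of a square matrix (meaningful when it is invertible).\<close>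
definition the_inv_mat :: "real mat \<Rightarrow> real mat" where
  "the_inv_mat M = (SOME P. P \<in> carrier_mat (dim_row M) (dim_row M) \<and> inverts_mat M P \<and> inverts_mat P M)"

end

theory Submission
  imports Defs "Jordan_Normal_Form.Determinant"
begin

text \<open>Since Z shifts block rows down by one, Z M vanishes on and above the block diagonal
  whenever M is block lower triangular. Hence L = I - Z A - Z B K is unit lower triangular,
  so invertible, and the closed-loop maps and the constraint follow by applying L\<inverse> to
  the stacked dynamics. Conversely, the matrix part of the constraint reads
  \<Phi>x = I + Z (A \<Phi>x + B \<Phi>u), so \<Phi>x is unit lower triangular as well;
  for K = \<Phi>u \<Phi>x\<inverse> it becomes L \<Phi>x = I, and multiplying the vector part by \<Phi>x
  recovers the affine terms.\<close>

lemma invertible_mat_unit_lower_triangular: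
  fixes M :: "'a::field mat"
  assumes M: "M \<in> carrier_mat N N"
    and upper: "\<And>i j. i \<le> j \<Longrightarrow> j < N \<Longrightarrow> M $$ (i,j) = 1\<^sub>m N $$ (i,j)"
  shows "invertible_mat M"
proof -
  have "det M = prod_list (diag_mat M)"
    by (rule det_lower_triangular[OF _ M]) (use upper in simp)
  also have "diag_mat M = replicate N 1"
    using M upper unfolding diag_mat_def by (auto intro: nth_equalityI)
  finally have "det M \<noteq> 0" by simp
  from det_non_zero_imp_unit[OF M this, of undefined]
  obtain P where "P \<in> carrier_mat N N" "M * P = 1\<^sub>m N" "P * M = 1\<^sub>m N"
    unfolding Units_def ring_mat_def by auto
  with M show ?thesis unfolding invertible_mat_def inverts_mat_def by auto
qed

lemma the_inv_mat_inverse: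
  assumes L: "L \<in> carrier_mat N N" and inv: "invertible_mat L"
  shows "the_inv_mat L \<in> carrier_mat N N"
    and "L * the_inv_mat L = 1\<^sub>m N" and "the_inv_mat L * L = 1\<^sub>m N"
proof -
  obtain P where "inverts_mat L P" "inverts_mat P L" using inv unfolding invertible_mat_def by auto
  hence "P \<in> carrier_mat (dim_row L) (dim_row L) \<and> inverts_mat L P \<and> inverts_mat P L"
    using L unfolding inverts_mat_def
    by (metis carrier_matD carrier_matI index_mult_mat(2,3) index_one_mat(2,3))
  hence "the_inv_mat L \<in> carrier_mat (dim_row L) (dim_row L) \<and>
      inverts_mat L (the_inv_mat L) \<and> inverts_mat (the_inv_mat L) L"
    unfolding the_inv_mat_def by (rule someI)
  with L show "the_inv_mat L \<in> carrier_mat N N"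
    and "L * the_inv_mat L = 1\<^sub>m N" and "the_inv_mat L * L = 1\<^sub>m N"
    unfolding inverts_mat_def by auto
qed

lemma invertible_mat_right_inverse:
  fixes L P :: "'a::field mat"
  assumes "L \<in> carrier_mat N N" "P \<in> carrier_mat N N" "L * P = 1\<^sub>m N"
  shows "invertible_mat L"
  using assms mat_mult_left_right_inverse[OF assms]
  unfolding invertible_mat_def inverts_mat_def by auto

lemma the_inv_mat_eqI:
  assumes L: "L \<in> carrier_mat N N" and P: "P \<in> carrier_mat N N" and LP: "L * P = 1\<^sub>m N"
  shows "the_inv_mat L = P"
proof -
  note Q = the_inv_mat_inverse[OF L invertible_mat_right_inverse[OF L P LP]]
  have "the_inv_mat L = the_inv_mat L * (L * P)" using Q(1) LP by simp
  also have "\<dots> = P" using Q(1,3) L P by (simp add: assoc_mult_mat[symmetric])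
  finally show ?thesis .
qed

lemma closed_loop_trajectory:
  fixes F G K P :: "'a::comm_ring_1 mat"
  assumes F: "F \<in> carrier_mat N N" and G: "G \<in> carrier_mat N M" and K: "K \<in> carrier_mat M N"
    and P: "P \<in> carrier_mat N N" and PL: "P * (1\<^sub>m N - F - G * K) = 1\<^sub>m N"
    and x: "x \<in> carrier_vec N" and w: "w \<in> carrier_vec N"
    and us: "us \<in> carrier_vec M" and r: "r \<in> carrier_vec N"
    and x_eq: "x = F *\<^sub>v x + G *\<^sub>v (K *\<^sub>v x + us) + r + w"
  shows "x = P *\<^sub>v w + P *\<^sub>v (G *\<^sub>v us + r)"
    and "K *\<^sub>v x + us = (K * P) *\<^sub>v w + ((K * P) *\<^sub>v (G *\<^sub>v us + r) + us)"
proof -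
  have GK: "G * K \<in> carrier_mat N N" using G K by simp
  have "(1\<^sub>m N - F - G * K) *\<^sub>v x = x - F *\<^sub>v x - G *\<^sub>v (K *\<^sub>v x)"
    using minus_mult_distrib_mat_vec[OF minus_carrier_mat[OF F] GK x]
      minus_mult_distrib_mat_vec[OF one_carrier_mat F x] G K x by simp
  also have "\<dots> = (G *\<^sub>v us + r) + w"
  proof (rule eq_vecI)
    fix i assume "i < dim_vec (G *\<^sub>v us + r + w)"
    hence i: "i < N" using w by simp
    have "G *\<^sub>v (K *\<^sub>v x + us) = G *\<^sub>v (K *\<^sub>v x) + G *\<^sub>v us"
      using G K x us by (simp add: mult_add_distrib_mat_vec)
    hence "x $ i = (F *\<^sub>v x) $ i + (G *\<^sub>v (K *\<^sub>v x)) $ i + (G *\<^sub>v us) $ i + r $ i + w $ i"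
      using arg_cong[OF x_eq, of "\<lambda>v. v $ i"] i F G r w by simp
    thus "(x - F *\<^sub>v x - G *\<^sub>v (K *\<^sub>v x)) $ i = (G *\<^sub>v us + r + w) $ i"
      using i F G r w x by simp
  qed (use G r w x in simp)
  finally have Lx: "(1\<^sub>m N - F - G * K) *\<^sub>v x = (G *\<^sub>v us + r) + w" .
  have "x = (P * (1\<^sub>m N - F - G * K)) *\<^sub>v x" using PL x by simp
  also have "\<dots> = P *\<^sub>v ((G *\<^sub>v us + r) + w)"
    using assoc_mult_mat_vec[OF P _ x] minus_carrier_mat[OF GK] Lx by simp
  also have "\<dots> = P *\<^sub>v w + P *\<^sub>v (G *\<^sub>v us + r)"
    using mult_add_distrib_mat_vec[OF P _ w, of "G *\<^sub>v us + r"] G us r w P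
    by (simp add: comm_add_vec[of _ N])
  finally show x_sol: "x = P *\<^sub>v w + P *\<^sub>v (G *\<^sub>v us + r)" .
  show "K *\<^sub>v x + us = (K * P) *\<^sub>v w + ((K * P) *\<^sub>v (G *\<^sub>v us + r) + us)"
    using K P w G us r unfolding x_sol
    by (simp add: mult_add_distrib_mat_vec[of K M N] assoc_add_vec[of _ M])
qed

lemma closed_loop_constraint:
  fixes F G K P :: "'a::comm_ring_1 mat"
  assumes F: "F \<in> carrier_mat N N" and G: "G \<in> carrier_mat N M" and K: "K \<in> carrier_mat M N"
    and P: "P \<in> carrier_mat N N" and LP: "(1\<^sub>m N - F - G * K) * P = 1\<^sub>m N"
    and us: "us \<in> carrier_vec M" and r: "r \<in> carrier_vec N"
  shows "(1\<^sub>m N - F) * P - G * (K * P) = 1\<^sub>m N"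
    and "(1\<^sub>m N - F) *\<^sub>v (P *\<^sub>v (G *\<^sub>v us + r)) - G *\<^sub>v ((K * P) *\<^sub>v (G *\<^sub>v us + r) + us) = r"
proof -
  have GK: "G * K \<in> carrier_mat N N" using G K by simp
  show mat: "(1\<^sub>m N - F) * P - G * (K * P) = 1\<^sub>m N"
    using LP minus_mult_distrib_mat[OF minus_carrier_mat[OF F] GK P] G K P
    by (simp add: assoc_mult_mat[of G N M K N P N])
  define c where "c = G *\<^sub>v us + r"
  have cc: "c \<in> carrier_vec N" unfolding c_def using G us r by simp
  have IF: "1\<^sub>m N - F \<in> carrier_mat N N" using F by (rule minus_carrier_mat)
  have IFP: "(1\<^sub>m N - F) * P \<in> carrier_mat N N" using IF P by simp
  have "((1\<^sub>m N - F) * P - G * (K * P)) *\<^sub>v c = c" using mat cc by simp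
  hence Lc: "(1\<^sub>m N - F) *\<^sub>v (P *\<^sub>v c) - G *\<^sub>v ((K * P) *\<^sub>v c) = c"
    using minus_mult_distrib_mat_vec[OF IFP _ cc, of "G * (K * P)"] IF G mult_carrier_mat[OF K P] P cc
    by simp
  have split: "G *\<^sub>v ((K * P) *\<^sub>v c + us) = G *\<^sub>v ((K * P) *\<^sub>v c) + G *\<^sub>v us"
    using G K P cc us by (simp add: mult_add_distrib_mat_vec)
  show "(1\<^sub>m N - F) *\<^sub>v (P *\<^sub>v c) - G *\<^sub>v ((K * P) *\<^sub>v c + us) = r"
  proof (rule eq_vecI)
    fix i assume "i < dim_vec r"
    hence i: "i < N" using r by simp
    have "((1\<^sub>m N - F) *\<^sub>v (P *\<^sub>v c)) $ i - (G *\<^sub>v ((K * P) *\<^sub>v c)) $ i = c $ i"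
      using arg_cong[OF Lc, of "\<lambda>v. v $ i"] i IF G by simp
    then show "((1\<^sub>m N - F) *\<^sub>v (P *\<^sub>v c) - G *\<^sub>v ((K * P) *\<^sub>v c + us)) $ i = r $ i"
      unfolding split using i IF G us r by (simp add: c_def algebra_simps)
  qed (use IF G r in simp)
qed

lemma feedback_gain_from_response:
  fixes F G Phix Phiu Q :: "'a::comm_ring_1 mat"
  assumes F: "F \<in> carrier_mat N N" and G: "G \<in> carrier_mat N M"
    and Phix: "Phix \<in> carrier_mat N N" and Phiu: "Phiu \<in> carrier_mat M N"
    and Q: "Q \<in> carrier_mat N N" and QP: "Q * Phix = 1\<^sub>m N"
    and E1: "(1\<^sub>m N - F) * Phix - G * Phiu = 1\<^sub>m N"
  shows "(Phiu * Q) * Phix = Phiu" and "(1\<^sub>m N - F - G * (Phiu * Q)) * Phix = 1\<^sub>m N"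
proof -
  show KP: "(Phiu * Q) * Phix = Phiu"
    using Phiu Q Phix QP by (simp add: assoc_mult_mat[of Phiu M N Q N Phix N])
  have IF: "1\<^sub>m N - F \<in> carrier_mat N N" using F by (rule minus_carrier_mat)
  have GK: "G * (Phiu * Q) \<in> carrier_mat N N" using G Phiu Q by simp
  have "(1\<^sub>m N - F - G * (Phiu * Q)) * Phix = (1\<^sub>m N - F) * Phix - G * (Phiu * Q) * Phix"
    by (rule minus_mult_distrib_mat[OF IF GK Phix])
  also have "G * (Phiu * Q) * Phix = G * Phiu"
    using G Phiu Q Phix KP by (simp add: assoc_mult_mat[of G N M "Phiu * Q" N Phix N])
  finally show "(1\<^sub>m N - F - G * (Phiu * Q)) * Phix = 1\<^sub>m N" using E1 by simp
qed

lemma feedforward_from_response: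
  fixes F G K Phix Phiu :: "'a::comm_ring_1 mat"
  assumes F: "F \<in> carrier_mat N N" and G: "G \<in> carrier_mat N M" and K: "K \<in> carrier_mat M N"
    and Phix: "Phix \<in> carrier_mat N N"
    and PL: "Phix * (1\<^sub>m N - F - G * K) = 1\<^sub>m N" and KP: "K * Phix = Phiu"
    and phix: "phix \<in> carrier_vec N" and phiu: "phiu \<in> carrier_vec M" and r: "r \<in> carrier_vec N"
    and E2: "(1\<^sub>m N - F) *\<^sub>v phix - G *\<^sub>v phiu = r"
  shows "Phix *\<^sub>v (G *\<^sub>v (phiu - K *\<^sub>v phix) + r) = phix"
    and "Phiu *\<^sub>v (G *\<^sub>v (phiu - K *\<^sub>v phix) + r) + (phiu - K *\<^sub>v phix) = phiu"
proof -
  define c where "c = G *\<^sub>v (phiu - K *\<^sub>v phix) + r"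
  have IF: "1\<^sub>m N - F \<in> carrier_mat N N" using F by (rule minus_carrier_mat)
  have GK: "G * K \<in> carrier_mat N N" using G K by simp
  have L: "1\<^sub>m N - F - G * K \<in> carrier_mat N N" using GK by (rule minus_carrier_mat)
  have Kphix: "K *\<^sub>v phix \<in> carrier_vec M" using K phix by simp
  have cc: "c \<in> carrier_vec N" using G r phiu Kphix by (simp add: c_def)
  have "(1\<^sub>m N - F - G * K) *\<^sub>v phix = (1\<^sub>m N - F) *\<^sub>v phix - G *\<^sub>v (K *\<^sub>v phix)"
    using minus_mult_distrib_mat_vec[OF IF GK phix] G K phix by simp
  also have "\<dots> = c"
  proof (rule eq_vecI)
    fix i assume "i < dim_vec c"
    hence i: "i < N" using G r by (simp add: c_def)
    have "((1\<^sub>m N - F) *\<^sub>v phix) $ i - (G *\<^sub>v phiu) $ i = r $ i"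
      using arg_cong[OF E2, of "\<lambda>v. v $ i"] i IF G by simp
    moreover have "G *\<^sub>v (phiu - K *\<^sub>v phix) = G *\<^sub>v phiu - G *\<^sub>v (K *\<^sub>v phix)"
      by (rule mult_minus_distrib_mat_vec[OF G phiu Kphix])
    ultimately show "((1\<^sub>m N - F) *\<^sub>v phix - G *\<^sub>v (K *\<^sub>v phix)) $ i = c $ i"
      using i IF G r by (simp add: c_def algebra_simps)
  qed (use IF G r in \<open>simp add: c_def\<close>)
  finally have Lphix: "(1\<^sub>m N - F - G * K) *\<^sub>v phix = c" .
  have "phix = (Phix * (1\<^sub>m N - F - G * K)) *\<^sub>v phix" using PL phix by simp
  also have "\<dots> = Phix *\<^sub>v c" using assoc_mult_mat_vec[OF Phix L phix] Lphix by simp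
  finally show Phix_c: "Phix *\<^sub>v c = phix" by simp
  have "Phiu *\<^sub>v c = K *\<^sub>v phix"
    using assoc_mult_mat_vec[OF K Phix cc] KP Phix_c by simp
  then show "Phiu *\<^sub>v c + (phiu - K *\<^sub>v phix) = phiu"
    using K phix phiu by (intro eq_vecI) auto
qed

lemma block_lower_tri_carrier:
  "block_lower_tri p q T M \<Longrightarrow> M \<in> carrier_mat (p*(T+1)) (q*(T+1))"
  unfolding block_lower_tri_def by simp

lemma block_lower_tri_mult:
  assumes P: "block_lower_tri p q T P" and Q: "block_lower_tri q r T Q" and q: "0 < q"
  shows "block_lower_tri p r T (P * Q)"
  unfolding block_lower_tri_def
proof (intro conjI allI impI)
  show "P * Q \<in> carrier_mat (p*(T+1)) (r*(T+1))"
    by (rule mult_carrier_mat[OF block_lower_tri_carrier[OF P] block_lower_tri_carrier[OF Q]])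
  fix i j assume i: "i < p*(T+1)" and j: "j < r*(T+1)" and ij: "i div p < j div r"
  have "(P * Q) $$ (i,j) = (\<Sum>k\<in>{0..<q*(T+1)}. P $$ (i,k) * Q $$ (k,j))"
    using P Q i j unfolding block_lower_tri_def by (auto simp: scalar_prod_def)
  also have "\<dots> = 0"
  proof (rule sum.neutral, intro ballI)
    fix k assume k: "k \<in> {0..<q*(T+1)}"
    show "P $$ (i,k) * Q $$ (k,j) = 0"
    proof (cases "i div p < k div q")
      case True thus ?thesis using P i k unfolding block_lower_tri_def by auto
    next
      case False hence "k div q < j div r" using ij by auto
      thus ?thesis using Q j k unfolding block_lower_tri_def by auto
    qed
  qed
  finally show "(P * Q) $$ (i,j) = 0" .
qed

lemma block_lower_tri_calA: "block_lower_tri n n T (calA n T A)"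
  unfolding block_lower_tri_def calA_def by auto

lemma block_lower_tri_calB: "block_lower_tri n m T (calB n m T B)"
  unfolding block_lower_tri_def calB_def by auto

lemma Zop_carrier [simp]: "Zop n T \<in> carrier_mat (n*(T+1)) (n*(T+1))"
  unfolding Zop_def by simp

lemma Zop_mult_carrier:
  "block_lower_tri n q T M \<Longrightarrow> Zop n T * M \<in> carrier_mat (n*(T+1)) (q*(T+1))"
  by (rule mult_carrier_mat[OF Zop_carrier block_lower_tri_carrier])

lemma Zop_index:
  assumes n: "0 < n" and i: "i < n*(T+1)" and k: "k < n*(T+1)"
  shows "Zop n T $$ (i,k) = (if i = k + n then 1 else 0)"
proof -
  have "(i div n = k div n + 1 \<and> i mod n = k mod n) \<longleftrightarrow> i = k + n"
  proof
    assume h: "i div n = k div n + 1 \<and> i mod n = k mod n"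
    have "i = n * (i div n) + i mod n" by simp
    also have "\<dots> = n * (k div n) + k mod n + n" using h by (simp add: algebra_simps)
    finally show "i = k + n" by simp
  qed (use n in simp)
  thus ?thesis using i k unfolding Zop_def by simp
qed

lemma Zop_mult_index:
  assumes n: "0 < n" and M: "M \<in> carrier_mat (n*(T+1)) c" and i: "i < n*(T+1)" and j: "j < c"
  shows "(Zop n T * M) $$ (i,j) = (if n \<le> i then M $$ (i-n,j) else 0)"
proof -
  have "(Zop n T * M) $$ (i,j) = (\<Sum>k\<in>{0..<n*(T+1)}. Zop n T $$ (i,k) * M $$ (k,j))"
    using M i j Zop_carrier[of n T] by (simp add: scalar_prod_def)
  also have "\<dots> = (\<Sum>k\<in>{0..<n*(T+1)}. if k = i - n \<and> n \<le> i then M $$ (k,j) else 0)"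
    by (rule sum.cong) (auto simp: Zop_index[OF n i])
  also have "\<dots> = (if n \<le> i then M $$ (i-n,j) else 0)"
    using i by (cases "n \<le> i") auto
  finally show ?thesis .
qed

lemma Zop_mult_block_lower_tri_upper_zero:
  assumes n: "0 < n" and M: "block_lower_tri n q T M"
    and i: "i < n*(T+1)" and j: "j < q*(T+1)" and ij: "i div n \<le> j div q"
  shows "(Zop n T * M) $$ (i,j) = 0"
proof (cases "n \<le> i")
  case True
  have "i div n = Suc ((i - n) div n)" using True n by (simp add: le_div_geq)
  hence "(i - n) div n < j div q" using ij by linarith
  hence "M $$ (i-n,j) = 0" using M i j unfolding block_lower_tri_def by auto
  thus ?thesis using Zop_mult_index[OF n block_lower_tri_carrier[OF M] i j] True by simp
qed (use Zop_mult_index[OF n block_lower_tri_carrier[OF M] i j] in simp)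

lemma invertible_closed_loop_operator:
  assumes n: "0 < n" and m: "0 < m" and cA: "block_lower_tri n n T cA"
    and cB: "block_lower_tri n m T cB" and K: "block_lower_tri m n T K"
  shows "invertible_mat (1\<^sub>m (n*(T+1)) - Zop n T * cA - Zop n T * cB * K)"
proof (rule invertible_mat_unit_lower_triangular)
  have cBK: "block_lower_tri n n T (cB * K)" by (rule block_lower_tri_mult[OF cB K m])
  have ZBK: "Zop n T * cB * K = Zop n T * (cB * K)"
    by (rule assoc_mult_mat[OF Zop_carrier block_lower_tri_carrier[OF cB] block_lower_tri_carrier[OF K]])
  fix i j assume ij: "i \<le> j" and j: "j < n*(T+1)"
  have d: "i div n \<le> j div n" using ij by (rule div_le_mono)
  have "(Zop n T * cA) $$ (i,j) = 0" "(Zop n T * (cB * K)) $$ (i,j) = 0"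
    using Zop_mult_block_lower_tri_upper_zero[OF n cA, of i j]
      Zop_mult_block_lower_tri_upper_zero[OF n cBK, of i j] ij j d by auto
  then show "(1\<^sub>m (n*(T+1)) - Zop n T * cA - Zop n T * cB * K) $$ (i,j)
      = 1\<^sub>m (n*(T+1)) $$ (i,j)"
    unfolding ZBK using ij j Zop_carrier[of n T] block_lower_tri_carrier[OF cA]
      block_lower_tri_carrier[OF cBK] by (auto simp del: Zop_carrier)
qed (rule minus_carrier_mat, rule mult_carrier_mat[OF Zop_mult_carrier[OF cB] block_lower_tri_carrier[OF K]])

lemma invertible_state_response:
  assumes n: "0 < n" and m: "0 < m" and cA: "block_lower_tri n n T cA"
    and cB: "block_lower_tri n m T cB"
    and Phix: "block_lower_tri n n T Phix" and Phiu: "block_lower_tri m n T Phiu"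
    and E1: "(1\<^sub>m (n*(T+1)) - Zop n T * cA) * Phix - (Zop n T * cB) * Phiu = 1\<^sub>m (n*(T+1))"
  shows "invertible_mat Phix"
proof (rule invertible_mat_unit_lower_triangular[OF block_lower_tri_carrier[OF Phix]])
  have A: "block_lower_tri n n T (cA * Phix)" by (rule block_lower_tri_mult[OF cA Phix n])
  have B: "block_lower_tri n n T (cB * Phiu)" by (rule block_lower_tri_mult[OF cB Phiu m])
  note Z = Zop_carrier[of n T] and cA' = block_lower_tri_carrier[OF cA]
    and cB' = block_lower_tri_carrier[OF cB] and Phix' = block_lower_tri_carrier[OF Phix]
    and Phiu' = block_lower_tri_carrier[OF Phiu]
  have "(1\<^sub>m (n*(T+1)) - Zop n T * cA) * Phix = Phix - Zop n T * (cA * Phix)"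
    using minus_mult_distrib_mat[OF one_carrier_mat mult_carrier_mat[OF Z cA'] Phix']
      assoc_mult_mat[OF Z cA' Phix'] Phix' by simp
  moreover have "(Zop n T * cB) * Phiu = Zop n T * (cB * Phiu)"
    by (rule assoc_mult_mat[OF Z cB' Phiu'])
  ultimately have E1': "Phix - Zop n T * (cA * Phix) - Zop n T * (cB * Phiu) = 1\<^sub>m (n*(T+1))"
    using E1 by simp
  fix i j assume ij: "i \<le> j" and j: "j < n*(T+1)"
  have d: "i div n \<le> j div n" using ij by (rule div_le_mono)
  have "(Zop n T * (cA * Phix)) $$ (i,j) = 0" "(Zop n T * (cB * Phiu)) $$ (i,j) = 0"
    using Zop_mult_block_lower_tri_upper_zero[OF n A, of i j]
      Zop_mult_block_lower_tri_upper_zero[OF n B, of i j] ij j d by auto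
  then show "Phix $$ (i,j) = 1\<^sub>m (n*(T+1)) $$ (i,j)"
    using arg_cong[OF E1', of "\<lambda>M. M $$ (i,j)"] ij j Z Phix'
      block_lower_tri_carrier[OF A] block_lower_tri_carrier[OF B] by (auto simp del: Zop_carrier)
qed

lemma closed_loop_maps_of_policy:
  fixes cA cB K :: "real mat"
  assumes n: "0 < n" and m: "0 < m" and cA: "block_lower_tri n n T cA"
    and cB: "block_lower_tri n m T cB" and K: "block_lower_tri m n T K"
    and us: "us \<in> carrier_vec (m*(T+1))" and sb: "sb \<in> carrier_vec (n*(T+1))"
  defines "L \<equiv> 1\<^sub>m (n*(T+1)) - Zop n T * cA - Zop n T * cB * K"
    and "c \<equiv> Zop n T *\<^sub>v (cB *\<^sub>v us + sb)"
  shows "invertible_mat L"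
    and "\<lbrakk>x \<in> carrier_vec (n*(T+1)); w \<in> carrier_vec (n*(T+1));
          x = (Zop n T * cA) *\<^sub>v x + (Zop n T * cB) *\<^sub>v (K *\<^sub>v x + us) + Zop n T *\<^sub>v sb + w\<rbrakk>
         \<Longrightarrow> x = the_inv_mat L *\<^sub>v w + the_inv_mat L *\<^sub>v c \<and>
             K *\<^sub>v x + us = (K * the_inv_mat L) *\<^sub>v w + ((K * the_inv_mat L) *\<^sub>v c + us)"
    and "(1\<^sub>m (n*(T+1)) - Zop n T * cA) * the_inv_mat L - (Zop n T * cB) * (K * the_inv_mat L)
         = 1\<^sub>m (n*(T+1))"
    and "(1\<^sub>m (n*(T+1)) - Zop n T * cA) *\<^sub>v (the_inv_mat L *\<^sub>v c)
         - (Zop n T * cB) *\<^sub>v ((K * the_inv_mat L) *\<^sub>v c + us) = Zop n T *\<^sub>v sb"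
proof -
  note Z = Zop_carrier[of n T] and K' = block_lower_tri_carrier[OF K]
  note ZA = Zop_mult_carrier[OF cA] and ZB = Zop_mult_carrier[OF cB]
  have Zsb: "Zop n T *\<^sub>v sb \<in> carrier_vec (n*(T+1))" using Z sb by simp
  have c: "c = (Zop n T * cB) *\<^sub>v us + Zop n T *\<^sub>v sb"
    unfolding c_def using Z block_lower_tri_carrier[OF cB] us sb
    by (simp add: mult_add_distrib_mat_vec[OF Z])
  show inv: "invertible_mat L"
    unfolding L_def by (rule invertible_closed_loop_operator[OF n m cA cB K])
  have "L \<in> carrier_mat (n*(T+1)) (n*(T+1))" unfolding L_def
    using ZB K' by (simp add: minus_carrier_mat)
  note P = the_inv_mat_inverse[OF this inv, unfolded L_def]
  show "x = the_inv_mat L *\<^sub>v w + the_inv_mat L *\<^sub>v c \<and>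
      K *\<^sub>v x + us = (K * the_inv_mat L) *\<^sub>v w + ((K * the_inv_mat L) *\<^sub>v c + us)"
    if "x \<in> carrier_vec (n*(T+1))" "w \<in> carrier_vec (n*(T+1))"
      "x = (Zop n T * cA) *\<^sub>v x + (Zop n T * cB) *\<^sub>v (K *\<^sub>v x + us) + Zop n T *\<^sub>v sb + w"
    unfolding c L_def using closed_loop_trajectory[OF ZA ZB K' P(1,3) that(1,2) us Zsb that(3)] by simp
  show "(1\<^sub>m (n*(T+1)) - Zop n T * cA) * the_inv_mat L - (Zop n T * cB) * (K * the_inv_mat L)
      = 1\<^sub>m (n*(T+1))"
    "(1\<^sub>m (n*(T+1)) - Zop n T * cA) *\<^sub>v (the_inv_mat L *\<^sub>v c)
      - (Zop n T * cB) *\<^sub>v ((K * the_inv_mat L) *\<^sub>v c + us) = Zop n T *\<^sub>v sb"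
    unfolding c L_def by (rule closed_loop_constraint[OF ZA ZB K' P(1,2) us Zsb])+
qed

lemma policy_of_closed_loop_maps:
  fixes cA cB Phix Phiu :: "real mat"
  assumes n: "0 < n" and m: "0 < m" and cA: "block_lower_tri n n T cA"
    and cB: "block_lower_tri n m T cB"
    and Phix: "block_lower_tri n n T Phix" and Phiu: "block_lower_tri m n T Phiu"
    and phix: "phix \<in> carrier_vec (n*(T+1))" and phiu: "phiu \<in> carrier_vec (m*(T+1))"
    and E1: "(1\<^sub>m (n*(T+1)) - Zop n T * cA) * Phix - (Zop n T * cB) * Phiu = 1\<^sub>m (n*(T+1))"
    and E2: "(1\<^sub>m (n*(T+1)) - Zop n T * cA) *\<^sub>v phix - (Zop n T * cB) *\<^sub>v phiu = Zop n T *\<^sub>v sb"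
    and sb: "sb \<in> carrier_vec (n*(T+1))"
  defines "K \<equiv> Phiu * the_inv_mat Phix"
  shows "invertible_mat Phix"
    and "invertible_mat (1\<^sub>m (n*(T+1)) - Zop n T * cA - Zop n T * cB * K)"
    and "the_inv_mat (1\<^sub>m (n*(T+1)) - Zop n T * cA - Zop n T * cB * K) = Phix"
    and "K * Phix = Phiu"
    and "Phix *\<^sub>v (Zop n T *\<^sub>v (cB *\<^sub>v (phiu - K *\<^sub>v phix) + sb)) = phix"
    and "Phiu *\<^sub>v (Zop n T *\<^sub>v (cB *\<^sub>v (phiu - K *\<^sub>v phix) + sb)) + (phiu - K *\<^sub>v phix) = phiu"
proof -
  define us where "us = phiu - K *\<^sub>v phix"
  define L where "L = 1\<^sub>m (n*(T+1)) - Zop n T * cA - Zop n T * cB * K"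
  define c where "c = Zop n T *\<^sub>v (cB *\<^sub>v us + sb)"
  note Z = Zop_carrier[of n T] and Phix' = block_lower_tri_carrier[OF Phix]
    and Phiu' = block_lower_tri_carrier[OF Phiu]
  note ZA = Zop_mult_carrier[OF cA] and ZB = Zop_mult_carrier[OF cB]
  have Zsb: "Zop n T *\<^sub>v sb \<in> carrier_vec (n*(T+1))" using Z sb by simp
  show inv: "invertible_mat Phix" by (rule invertible_state_response[OF n m cA cB Phix Phiu E1])
  note Q = the_inv_mat_inverse[OF Phix' inv]
  have K': "K \<in> carrier_mat (m*(T+1)) (n*(T+1))" unfolding K_def using Phiu' Q(1) by simp
  have us': "us \<in> carrier_vec (m*(T+1))" unfolding us_def using K' phix phiu by simp
  have c: "c = (Zop n T * cB) *\<^sub>v us + Zop n T *\<^sub>v sb"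
    unfolding c_def using Z block_lower_tri_carrier[OF cB] us' sb
    by (simp add: mult_add_distrib_mat_vec[OF Z])
  note KP_LP = feedback_gain_from_response[OF ZA ZB Phix' Phiu' Q(1,3) E1, folded K_def]
  show "K * Phix = Phiu" by (rule KP_LP(1))
  have L': "L \<in> carrier_mat (n*(T+1)) (n*(T+1))" unfolding L_def
    using ZB K' by (simp add: minus_carrier_mat)
  have LP: "L * Phix = 1\<^sub>m (n*(T+1))" unfolding L_def by (rule KP_LP(2))
  show "invertible_mat L" by (rule invertible_mat_right_inverse[OF L' Phix' LP])
  show "the_inv_mat L = Phix" by (rule the_inv_mat_eqI[OF L' Phix' LP])
  have PL: "Phix * L = 1\<^sub>m (n*(T+1))" by (rule mat_mult_left_right_inverse[OF L' Phix' LP])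
  show "Phix *\<^sub>v c = phix" "Phiu *\<^sub>v c + us = phiu"
    unfolding c us_def
    by (rule feedforward_from_response[OF ZA ZB K' Phix' PL[unfolded L_def] KP_LP(1) phix phiu Zsb E2])+
qed

theorem theorem1:
  fixes n m T :: nat and A B :: "nat \<Rightarrow> real mat" and s :: "real vec"
  assumes n_pos: "0 < n" and m_pos: "0 < m"
    and A_dim: "\<And>t. t < T \<Longrightarrow> A t \<in> carrier_mat n n"
    and B_dim: "\<And>t. t < T \<Longrightarrow> B t \<in> carrier_mat n m"
    and s_dim: "s \<in> carrier_vec n"
  defines "Z \<equiv> Zop n T" and "cA \<equiv> calA n T A" and "cB \<equiv> calB n m T B"
    and "sb \<equiv> sbold n T s" and "I \<equiv> 1\<^sub>m (n*(T+1))"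
  shows
   "(\<forall>K us. block_lower_tri m n T K \<longrightarrow> us \<in> carrier_vec (m*(T+1)) \<longrightarrow>
      (let L = I - Z * cA - Z * cB * K;
           Phix = the_inv_mat L;
           phix = Phix *\<^sub>v (Z *\<^sub>v (cB *\<^sub>v us + sb));
           Phiu = K * the_inv_mat L;
           phiu = Phiu *\<^sub>v (Z *\<^sub>v (cB *\<^sub>v us + sb)) + us
       in invertible_mat L \<and>
          (\<forall>x w. x \<in> carrier_vec (n*(T+1)) \<longrightarrow> w \<in> carrier_vec (n*(T+1)) \<longrightarrow>
              x = (Z * cA) *\<^sub>v x + (Z * cB) *\<^sub>v (K *\<^sub>v x + us) + Z *\<^sub>v sb + w \<longrightarrow>
              x = Phix *\<^sub>v w + phix \<and> K *\<^sub>v x + us = Phiu *\<^sub>v w + phiu) \<and>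
          (I - Z * cA) * Phix - (Z * cB) * Phiu = I \<and>
          (I - Z * cA) *\<^sub>v phix - (Z * cB) *\<^sub>v phiu = Z *\<^sub>v sb))
    \<and>
    (\<forall>Phix Phiu phix phiu.
      block_lower_tri n n T Phix \<longrightarrow> block_lower_tri m n T Phiu \<longrightarrow>
      phix \<in> carrier_vec (n*(T+1)) \<longrightarrow> phiu \<in> carrier_vec (m*(T+1)) \<longrightarrow>
      (I - Z * cA) * Phix - (Z * cB) * Phiu = I \<longrightarrow>
      (I - Z * cA) *\<^sub>v phix - (Z * cB) *\<^sub>v phiu = Z *\<^sub>v sb \<longrightarrow>
      invertible_mat Phix \<and>
      (let K = Phiu * the_inv_mat Phix;
           us = phiu - (Phiu * the_inv_mat Phix) *\<^sub>v phix;
           L = I - Z * cA - Z * cB * K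
       in invertible_mat L \<and>
          the_inv_mat L = Phix \<and>
          K * the_inv_mat L = Phiu \<and>
          Phix *\<^sub>v (Z *\<^sub>v (cB *\<^sub>v us + sb)) = phix \<and>
          Phiu *\<^sub>v (Z *\<^sub>v (cB *\<^sub>v us + sb)) + us = phiu))"
proof -
  have cA: "block_lower_tri n n T cA" and cB: "block_lower_tri n m T cB"
    unfolding cA_def cB_def by (rule block_lower_tri_calA, rule block_lower_tri_calB)
  have sb: "sb \<in> carrier_vec (n*(T+1))" unfolding sb_def sbold_def by simp
  show ?thesis
    unfolding Z_def I_def
  proof (intro conjI allI impI, goal_cases)
    case (1 K us)
    show ?case
      using closed_loop_maps_of_policy[OF n_pos m_pos cA cB 1 sb] by (simp add: Let_def)
  next
    case (2 Phix Phiu phix phiu)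
    show ?case by (rule policy_of_closed_loop_maps(1)[OF n_pos m_pos cA cB 2 sb])
  next
    case (3 Phix Phiu phix phiu)
    show ?case
      using policy_of_closed_loop_maps(2-6)[OF n_pos m_pos cA cB 3 sb] by (simp add: Let_def)
  qed
qed

end
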